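(* There is an absolute constant $C>0$ such that the following holds. Let $\mathcal{T}=\sum_{l=1}^r\sigma^*_lU^*_l\otimes U^*_l\otimes U^*_l+\mathcal{E}$ with the noise $\mathcal{E}$ satisfying $\max_{ijk}|\mathcal{E}_{ijk}|\le\|\mathcal{E}\|_F/n^{1.5}$, and let $\nu_i,Z,p_{ijk},\widehat p_{ijk},\mathcal{W}_{ijk},\delta_{ijk}$ be as in the context. Let $U\in\mathbb{R}^{n\times r}$ be fixed (independent of $\delta$) with unit-norm columns and $|U_{il}|\le2\nu_i$ for all $i,l$, and fix $q\in[r]$ and $\epsilon\in(0,1]$. If $m\ge\frac{C}{\epsilon^2}nZ\log^2(n)$, then with probability at least $1-n^{-10}$, $$\Big\|\sum_{i=1}^n\sum_{j,k}\big(\delta_{ijk}\mathcal{W}_{ijk}-1\big)\mathcal{E}_{ijk}U_{jq}U_{kq}\,e_i\Big\|\le\epsilon\|\mathcal{E}\|_F .$$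
   Context: $U^*\in\mathbb{R}^{n\times r}$ has orthonormal columns, $\sigma^*_l>0$. $\nu_i=\frac{\|\mathcal{T}_{i,:,:}\|_F}{\|\mathcal{T}\|_F}+\frac1{\sqrt n}$ with $\|\mathcal{T}_{i,:,:}\|_F^2=\sum_{j,k}\mathcal{T}_{ijk}^2$; $Z=(\sum_i\nu_i^{3/2})^2$; $p_{ijk}=0.5\frac{\nu_i^{3/2}\nu_j^{3/2}+\nu_j^{3/2}\nu_k^{3/2}+\nu_k^{3/2}\nu_i^{3/2}}{3nZ}+0.5\frac{\mathcal{T}_{ijk}^2}{\|\mathcal{T}\|_F^2}$; $\widehat p_{ijk}=\min\{mp_{ijk},1\}$; $\mathcal{W}_{ijk}=1/\widehat p_{ijk}$; $\delta_{ijk}$ independent Bernoulli$(\widehat p_{ijk})$; $e_i$ the standard basis vectors; $\|\cdot\|_F$ the Frobenius norm. *)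

theory Defs
  imports "HOL-Probability.Probability"
begin

text \<open>Tensors in R^(n x n x n) are functions nat => nat => nat => real, indices 0..n-1.
  Matrices in R^(n x r) are functions nat => nat => real (row index, column index).\<close>

definition frob3 :: "nat \<Rightarrow> (nat \<Rightarrow> nat \<Rightarrow> nat \<Rightarrow> real) \<Rightarrow> real" where
  "frob3 n T = sqrt (\<Sum>i<n. \<Sum>j<n. \<Sum>k<n. (T i j k)\<^sup>2)"

definition slice_norm :: "nat \<Rightarrow> (nat \<Rightarrow> nat \<Rightarrow> nat \<Rightarrow> real) \<Rightarrow> nat \<Rightarrow> real" where
  "slice_norm n T i = sqrt (\<Sum>j<n. \<Sum>k<n. (T i j k)\<^sup>2)"

definition signal3 :: "nat \<Rightarrow> (nat \<Rightarrow> real) \<Rightarrow> (nat \<Rightarrow> nat \<Rightarrow> real) \<Rightarrow> nat \<Rightarrow> nat \<Rightarrow> nat \<Rightarrow> real" where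
  "signal3 r \<sigma> U i j k = (\<Sum>l<r. \<sigma> l * U i l * U j l * U k l)"

definition nu :: "nat \<Rightarrow> (nat \<Rightarrow> nat \<Rightarrow> nat \<Rightarrow> real) \<Rightarrow> nat \<Rightarrow> real" where
  "nu n T i = slice_norm n T i / frob3 n T + 1 / sqrt (real n)"

definition Zc :: "nat \<Rightarrow> (nat \<Rightarrow> nat \<Rightarrow> nat \<Rightarrow> real) \<Rightarrow> real" where
  "Zc n T = (\<Sum>i<n. nu n T i powr (3/2))\<^sup>2"

definition samp_p :: "nat \<Rightarrow> (nat \<Rightarrow> nat \<Rightarrow> nat \<Rightarrow> real) \<Rightarrow> nat \<Rightarrow> nat \<Rightarrow> nat \<Rightarrow> real" where
  "samp_p n T i j k =
     0.5 * (nu n T i powr (3/2) * nu n T j powr (3/2) + nu n T j powr (3/2) * nu n T k powr (3/2)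
            + nu n T k powr (3/2) * nu n T i powr (3/2)) / (3 * real n * Zc n T)
     + 0.5 * (T i j k)\<^sup>2 / (frob3 n T)\<^sup>2"

definition phat :: "real \<Rightarrow> nat \<Rightarrow> (nat \<Rightarrow> nat \<Rightarrow> nat \<Rightarrow> real) \<Rightarrow> nat \<Rightarrow> nat \<Rightarrow> nat \<Rightarrow> real" where
  "phat m n T i j k = min (m * samp_p n T i j k) 1"

definition Wt :: "real \<Rightarrow> nat \<Rightarrow> (nat \<Rightarrow> nat \<Rightarrow> nat \<Rightarrow> real) \<Rightarrow> nat \<Rightarrow> nat \<Rightarrow> nat \<Rightarrow> real" where
  "Wt m n T i j k = 1 / phat m n T i j k"

definition delta_dist :: "real \<Rightarrow> nat \<Rightarrow> (nat \<Rightarrow> nat \<Rightarrow> nat \<Rightarrow> real) \<Rightarrow> (nat \<times> nat \<times> nat \<Rightarrow> bool) pmf" where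
  "delta_dist m n T = Pi_pmf ({..<n} \<times> {..<n} \<times> {..<n}) False
      (\<lambda>(i, j, k). bernoulli_pmf (phat m n T i j k))"

end

theory Submission
  imports Defs
begin

text \<open>Each coordinate of the vector is a sum of independent, centred, importance-weighted
  Bernoulli terms. The sampling probability of entry (i,j,k) is at least
  m (nu_j nu_k)^(3/2) / (6 n Z), while the incoherence of E and U bounds the entry itself by
  4 ||E||_F nu_j nu_k / n^(3/2). Hence every reweighted term is at most 24 ||E||_F Z / m and,
  since sum_j nu_j <= 2 sqrt n, the variance of a coordinate is at most
  192 ||E||_F^2 Z / (m sqrt n). A Chernoff bound, with the moment generating function controlled
  through exp x <= 1 + x + x^2 on [-1,1], shows that each coordinate exceeds eps ||E||_F / sqrt n
  with probability at most n^(-11) once m >= 18432 eps^(-2) n Z log^2 n; a union bound over the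
  n coordinates finishes the proof.\<close>

lemma exp_le_one_plus_self_plus_square:
  fixes x :: real assumes "\<bar>x\<bar> \<le> 1" shows "exp x \<le> 1 + x + x\<^sup>2"
proof (cases "x \<ge> 0")
  case True thus ?thesis using exp_bound assms by auto
next
  case False
  define y where "y = -x"
  have y: "0 \<le> y" "y \<le> 1" using False assms by (auto simp: y_def)
  have "exp x = 1 / exp y" by (simp add: y_def exp_minus field_simps)
  also have "\<dots> \<le> 1 / (1 + y)" using exp_ge_add_one_self[of y] y
    by (intro divide_left_mono) auto
  also have "\<dots> \<le> 1 - y + y\<^sup>2"
  proof -
    have "(1 + y) * (1 - y + y\<^sup>2) = 1 + y ^ 3"
      by (simp add: algebra_simps power2_eq_square power3_eq_cube)
    thus ?thesis using y by (simp add: field_simps)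
  qed
  finally show ?thesis by (simp add: y_def)
qed

lemma bernoulli_reweighted_mgf_le:
  fixes p l a :: real
  assumes p: "0 < p" "p \<le> 1" and small: "p < 1 \<Longrightarrow> \<bar>l * a\<bar> / p \<le> 1"
  shows "measure_pmf.expectation (bernoulli_pmf p) (\<lambda>b. exp (l * ((of_bool b * (1/p) - 1) * a)))
           \<le> exp (l\<^sup>2 * a\<^sup>2 * (1/p - 1))"
proof (cases "p = 1")
  case True thus ?thesis by simp
next
  case False
  hence small': "\<bar>l * a\<bar> / p \<le> 1" using p small by simp
  define x1 where "x1 = l * ((1/p - 1) * a)"
  define x0 where "x0 = - (l * a)"
  have "\<bar>l * a\<bar> \<le> \<bar>l * a\<bar> / p" using p by (simp add: field_simps mult_left_le_one_le)
  hence x0: "\<bar>x0\<bar> \<le> 1" using small' by (simp add: x0_def)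
  have "\<bar>x1\<bar> = \<bar>l * a\<bar> * (1/p - 1)" using p by (simp add: x1_def abs_mult mult_ac)
  also have "\<dots> \<le> \<bar>l * a\<bar> / p" using p by (simp add: field_simps)
  finally have x1: "\<bar>x1\<bar> \<le> 1" using small' by simp
  have "measure_pmf.expectation (bernoulli_pmf p) (\<lambda>b. exp (l * ((of_bool b * (1/p) - 1) * a)))
        = exp x1 * p + exp x0 * (1 - p)" using p by (simp add: x1_def x0_def)
  also have "\<dots> \<le> (1 + x1 + x1\<^sup>2) * p + (1 + x0 + x0\<^sup>2) * (1 - p)"
    using exp_le_one_plus_self_plus_square[OF x1] exp_le_one_plus_self_plus_square[OF x0] p
    by (intro add_mono mult_right_mono) auto
  also have "\<dots> = 1 + l\<^sup>2 * a\<^sup>2 * (1/p - 1)"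
    using p by (simp add: x1_def x0_def field_simps power2_eq_square)
  also have "\<dots> \<le> exp (l\<^sup>2 * a\<^sup>2 * (1/p - 1))" by (rule exp_ge_add_one_self)
  finally show ?thesis .
qed

lemma Pi_pmf_bernoulli_chernoff:
  fixes A S :: "'a set" and ph a :: "'a \<Rightarrow> real" and l c V :: real
  assumes fin: "finite A" and SA: "S \<subseteq> A" and ph: "\<And>x. x \<in> A \<Longrightarrow> 0 < ph x \<and> ph x \<le> 1"
    and small: "\<And>x. x \<in> S \<Longrightarrow> ph x < 1 \<Longrightarrow> \<bar>l * a x\<bar> / ph x \<le> 1"
    and V: "(\<Sum>x\<in>S. l\<^sup>2 * (a x)\<^sup>2 * (1/ph x - 1)) \<le> V"
  shows "measure_pmf.prob (Pi_pmf A False (\<lambda>x. bernoulli_pmf (ph x)))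
           {\<delta>. c \<le> l * (\<Sum>x\<in>S. (of_bool (\<delta> x) * (1/ph x) - 1) * a x)} \<le> exp (V - c)"
proof -
  define P where "P = Pi_pmf A False (\<lambda>x. bernoulli_pmf (ph x))"
  define g where "g x b = exp (l * ((of_bool b * (1/ph x) - 1) * a x))" for x b
  define f where "f x b = (if x \<in> S then g x b else 1)" for x b
  have finS: "finite S" using fin SA finite_subset by blast
  have exp_eq_prod: "exp (l * (\<Sum>x\<in>S. (of_bool (\<delta> x) * (1/ph x) - 1) * a x)) = (\<Prod>x\<in>A. f x (\<delta> x))"
    for \<delta>
  proof -
    have "exp (l * (\<Sum>x\<in>S. (of_bool (\<delta> x) * (1/ph x) - 1) * a x)) = (\<Prod>x\<in>A \<inter> S. g x (\<delta> x))"
      using finS SA by (simp add: sum_distrib_left exp_sum g_def Int_absorb1)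
    also have "\<dots> = (\<Prod>x\<in>A. f x (\<delta> x))" using fin by (simp add: prod.inter_restrict f_def)
    finally show ?thesis .
  qed
  have "measure_pmf.prob P {\<delta>. c \<le> l * (\<Sum>x\<in>S. (of_bool (\<delta> x) * (1/ph x) - 1) * a x)}
      = measure_pmf.prob P {\<delta>\<in>space (measure_pmf P). exp c \<le> (\<Prod>x\<in>A. f x (\<delta> x))}"
    by (simp flip: exp_eq_prod)
  also have "\<dots> \<le> measure_pmf.expectation P (\<lambda>\<delta>. \<Prod>x\<in>A. f x (\<delta> x)) / exp c"
    unfolding P_def
    by (intro integral_Markov_inequality_measure[where A = UNIV] integrable_prod_Pi_pmf fin
        integrable_measure_pmf_finite) (auto simp: f_def g_def intro!: prod_nonneg)
  also have "measure_pmf.expectation P (\<lambda>\<delta>. \<Prod>x\<in>A. f x (\<delta> x))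
           = (\<Prod>x\<in>A. measure_pmf.expectation (bernoulli_pmf (ph x)) (f x))"
    unfolding P_def by (intro expectation_prod_Pi_pmf fin integrable_measure_pmf_finite)
       (auto simp: f_def g_def)
  also have "\<dots> = (\<Prod>x\<in>A. if x \<in> S then measure_pmf.expectation (bernoulli_pmf (ph x)) (g x) else 1)"
    by (intro prod.cong refl) (auto simp: f_def [abs_def])
  also have "\<dots> = (\<Prod>x\<in>A \<inter> S. measure_pmf.expectation (bernoulli_pmf (ph x)) (g x))"
    using fin by (simp add: prod.inter_restrict)
  also have "\<dots> = (\<Prod>x\<in>S. measure_pmf.expectation (bernoulli_pmf (ph x)) (g x))"
    using SA by (simp add: Int_absorb1)
  also have "\<dots> \<le> (\<Prod>x\<in>S. exp (l\<^sup>2 * (a x)\<^sup>2 * (1/ph x - 1)))"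
  proof (intro prod_mono conjI)
    fix x assume x: "x \<in> S"
    show "0 \<le> measure_pmf.expectation (bernoulli_pmf (ph x)) (g x)"
      by (intro Bochner_Integration.integral_nonneg) (simp add: g_def)
    show "measure_pmf.expectation (bernoulli_pmf (ph x)) (g x) \<le> exp (l\<^sup>2 * (a x)\<^sup>2 * (1/ph x - 1))"
      unfolding g_def using ph[of x] x SA small[OF x] by (intro bernoulli_reweighted_mgf_le) auto
  qed
  also have "\<dots> \<le> exp V" using V finS by (simp add: exp_sum [symmetric])
  finally show ?thesis unfolding P_def by (simp add: exp_diff divide_right_mono)
qed

lemma Pi_pmf_bernoulli_abs_tail_le:
  fixes A S :: "'a set" and ph a :: "'a \<Rightarrow> real" and l t V :: real
  assumes fin: "finite A" and SA: "S \<subseteq> A" and ph: "\<And>x. x \<in> A \<Longrightarrow> 0 < ph x \<and> ph x \<le> 1"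
    and l: "0 < l" and small: "\<And>x. x \<in> S \<Longrightarrow> ph x < 1 \<Longrightarrow> l * \<bar>a x\<bar> / ph x \<le> 1"
    and V: "(\<Sum>x\<in>S. (a x)\<^sup>2 * (1/ph x - 1)) \<le> V"
  shows "measure_pmf.prob (Pi_pmf A False (\<lambda>x. bernoulli_pmf (ph x)))
           {\<delta>. t \<le> \<bar>\<Sum>x\<in>S. (of_bool (\<delta> x) * (1/ph x) - 1) * a x\<bar>} \<le> 2 * exp (l\<^sup>2 * V - l * t)"
proof -
  define P where "P = Pi_pmf A False (\<lambda>x. bernoulli_pmf (ph x))"
  define Y where "Y \<delta> = (\<Sum>x\<in>S. (of_bool (\<delta> x) * (1/ph x) - 1) * a x)" for \<delta>
  have tail: "measure_pmf.prob P {\<delta>. l * t \<le> l' * Y \<delta>} \<le> exp (l\<^sup>2 * V - l * t)"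
    if l': "\<bar>l'\<bar> = l" for l'
    unfolding P_def Y_def
  proof (rule Pi_pmf_bernoulli_chernoff[OF fin SA ph])
    show "\<bar>l' * a x\<bar> / ph x \<le> 1" if "x \<in> S" "ph x < 1" for x
      using small[OF that] l' by (simp add: abs_mult)
    have "l'\<^sup>2 = l\<^sup>2" using l' by (metis power2_abs)
    hence "(\<Sum>x\<in>S. l'\<^sup>2 * (a x)\<^sup>2 * (1/ph x - 1)) = l\<^sup>2 * (\<Sum>x\<in>S. (a x)\<^sup>2 * (1/ph x - 1))"
      by (simp add: sum_distrib_left mult.assoc)
    also have "\<dots> \<le> l\<^sup>2 * V" using V by (simp add: mult_left_mono)
    finally show "(\<Sum>x\<in>S. l'\<^sup>2 * (a x)\<^sup>2 * (1/ph x - 1)) \<le> l\<^sup>2 * V" .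
  qed simp
  have "{\<delta>. t \<le> \<bar>Y \<delta>\<bar>} \<subseteq> {\<delta>. l * t \<le> l * Y \<delta>} \<union> {\<delta>. l * t \<le> (- l) * Y \<delta>}"
  proof
    fix \<delta> assume "\<delta> \<in> {\<delta>. t \<le> \<bar>Y \<delta>\<bar>}"
    hence "t \<le> Y \<delta> \<or> t \<le> - Y \<delta>" by (cases "0 \<le> Y \<delta>") auto
    hence "l * t \<le> l * Y \<delta> \<or> l * t \<le> l * (- Y \<delta>)"
      using l mult_left_mono[of t "Y \<delta>" l] mult_left_mono[of t "- Y \<delta>" l] by auto
    thus "\<delta> \<in> {\<delta>. l * t \<le> l * Y \<delta>} \<union> {\<delta>. l * t \<le> (- l) * Y \<delta>}" by simp
  qed
  hence "measure_pmf.prob P {\<delta>. t \<le> \<bar>Y \<delta>\<bar>}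
      \<le> measure_pmf.prob P {\<delta>. l * t \<le> l * Y \<delta>} + measure_pmf.prob P {\<delta>. l * t \<le> (- l) * Y \<delta>}"
    by (intro order_trans[OF measure_pmf.finite_measure_mono measure_Un_le]) simp_all
  also have "\<dots> \<le> 2 * exp (l\<^sup>2 * V - l * t)" using tail[of l] tail[of "-l"] l by simp
  finally show ?thesis unfolding P_def Y_def .
qed

lemma prob_root_sum_squares_le:
  fixes P :: "'a pmf" and X :: "nat \<Rightarrow> 'a \<Rightarrow> real" and t b :: real
  assumes t: "0 \<le> t" and tail: "\<And>i. i < n \<Longrightarrow> measure_pmf.prob P {\<omega>. t \<le> \<bar>X i \<omega>\<bar>} \<le> b"
  shows "1 - real n * b \<le> measure_pmf.prob P {\<omega>. sqrt (\<Sum>i<n. (X i \<omega>)\<^sup>2) \<le> sqrt (real n) * t}"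
proof -
  define Bad where "Bad = (\<Union>i<n. {\<omega>. t \<le> \<bar>X i \<omega>\<bar>})"
  have "UNIV - Bad \<subseteq> {\<omega>. sqrt (\<Sum>i<n. (X i \<omega>)\<^sup>2) \<le> sqrt (real n) * t}"
  proof
    fix \<omega> assume "\<omega> \<in> UNIV - Bad"
    hence "\<bar>X i \<omega>\<bar> \<le> t" if "i < n" for i
      using that by (auto simp: Bad_def not_le intro: less_imp_le)
    hence "(X i \<omega>)\<^sup>2 \<le> t\<^sup>2" if "i < n" for i
      using that power_mono[of "\<bar>X i \<omega>\<bar>" t 2] by simp
    hence "(\<Sum>i<n. (X i \<omega>)\<^sup>2) \<le> (sqrt (real n) * t)\<^sup>2"
      using sum_mono[of "{..<n}" "\<lambda>i. (X i \<omega>)\<^sup>2" "\<lambda>_. t\<^sup>2"] by (simp add: power_mult_distrib)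
    thus "\<omega> \<in> {\<omega>. sqrt (\<Sum>i<n. (X i \<omega>)\<^sup>2) \<le> sqrt (real n) * t}"
      using t by (simp add: real_le_lsqrt)
  qed
  hence "measure_pmf.prob P (UNIV - Bad)
      \<le> measure_pmf.prob P {\<omega>. sqrt (\<Sum>i<n. (X i \<omega>)\<^sup>2) \<le> sqrt (real n) * t}"
    by (intro measure_pmf.finite_measure_mono) auto
  moreover have "measure_pmf.prob P Bad \<le> (\<Sum>i<n. measure_pmf.prob P {\<omega>. t \<le> \<bar>X i \<omega>\<bar>})"
    unfolding Bad_def by (intro measure_UNION_le) auto
  moreover have "(\<Sum>i<n. measure_pmf.prob P {\<omega>. t \<le> \<bar>X i \<omega>\<bar>}) \<le> real n * b"
    using sum_mono[of "{..<n}" _ "\<lambda>_. b"] tail by fastforce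
  ultimately show ?thesis using measure_pmf.prob_compl[of Bad P] by simp
qed

lemma frob3_square: "(frob3 n T)\<^sup>2 = (\<Sum>i<n. (slice_norm n T i)\<^sup>2)"
  unfolding frob3_def slice_norm_def by (simp add: sum_nonneg)

lemma frob3_nonneg: "0 \<le> frob3 n T"
  unfolding frob3_def by (simp add: sum_nonneg)

lemma nu_ge_inverse_sqrt: "1 / sqrt (real n) \<le> nu n T i"
  unfolding nu_def slice_norm_def frob3_def by (simp add: sum_nonneg)

lemma nu_pos: "0 < n \<Longrightarrow> 0 < nu n T i"
  by (rule less_le_trans[OF _ nu_ge_inverse_sqrt]) simp

lemma sum_nu_le: "(\<Sum>i<n. nu n T i) \<le> 2 * sqrt (real n)"
proof (cases "n = 0")
  case False
  define s where "s = sqrt (real n)"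
  define x where "x i = slice_norm n T i / frob3 n T" for i
  have s: "0 < s" "real n = s\<^sup>2" using False by (auto simp: s_def)
  have am_gm: "u \<le> s / 2 * u\<^sup>2 + 1 / (2 * s)" for u :: real
  proof -
    have "0 \<le> s / 2 * (u - 1 / s)\<^sup>2" using s by simp
    also have "\<dots> = s / 2 * u\<^sup>2 - u + 1 / (2 * s)" using s(1)
      by (simp add: power2_eq_square field_simps)
    finally show ?thesis by simp
  qed
  \<comment> \<open>the squares sum to 1, or to 0 in the junk case of a zero tensor\<close>
  have x_sq: "(\<Sum>i<n. (x i)\<^sup>2) \<le> 1"
  proof (cases "frob3 n T = 0")
    case False
    have "(\<Sum>i<n. (x i)\<^sup>2) = (\<Sum>i<n. (slice_norm n T i)\<^sup>2) / (frob3 n T)\<^sup>2"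
      by (simp add: x_def power_divide sum_divide_distrib)
    thus ?thesis using False by (simp add: frob3_square [symmetric])
  qed (simp add: x_def)
  have "(\<Sum>i<n. x i) \<le> (\<Sum>i<n. s / 2 * (x i)\<^sup>2 + 1 / (2 * s))"
    by (intro sum_mono am_gm)
  also have "\<dots> = s / 2 * (\<Sum>i<n. (x i)\<^sup>2) + s\<^sup>2 / (2 * s)"
    by (simp add: sum.distrib sum_distrib_left s(2)[symmetric])
  also have "\<dots> \<le> s / 2 + s\<^sup>2 / (2 * s)" using x_sq s by simp
  also have "\<dots> = s" using s by (simp add: power2_eq_square)
  finally have "(\<Sum>i<n. x i) \<le> s" .
  moreover have "(\<Sum>i<n. nu n T i) = (\<Sum>i<n. x i) + real n / s"
    by (simp add: nu_def x_def sum.distrib s_def)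
  ultimately have "(\<Sum>i<n. nu n T i) \<le> 2 * s" using s by (simp add: power2_eq_square)
  thus ?thesis by (simp add: s_def)
qed simp

lemma Zc_pos: assumes "0 < n" shows "0 < Zc n T"
proof -
  have "0 < nu n T i powr (3/2)" for i using nu_pos[OF assms, of T i] by simp
  thus ?thesis unfolding Zc_def using assms by (intro zero_less_power sum_pos) auto
qed

lemma powr_three_halves: "0 \<le> x \<Longrightarrow> (x::real) powr (3/2) = x * sqrt x"
  using powr_add[of x 1 "1/2"] by (simp add: powr_half_sqrt)

lemma samp_p_ge: "(nu n T j * nu n T k) powr (3/2) / (6 * real n * Zc n T) \<le> samp_p n T i j k"
proof -
  define w where "w l = nu n T l powr (3/2)" for l
  have "0 \<le> w i * w j" "0 \<le> w k * w i" by (simp_all add: w_def)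
  hence "w j * w k / (6 * real n * Zc n T) \<le> (w i * w j + w j * w k + w k * w i) / (6 * real n * Zc n T)"
    by (intro divide_right_mono) (simp_all add: Zc_def)
  also have "\<dots> \<le> samp_p n T i j k" by (simp add: samp_p_def w_def mult.assoc)
  finally show ?thesis using nu_ge_inverse_sqrt[of n T] by (simp add: w_def powr_mult)
qed

lemma phat_pos_le_one:
  assumes "0 < m" "0 < n" shows "0 < phat m n T i j k" "phat m n T i j k \<le> 1"
proof -
  have "0 < (nu n T j * nu n T k) powr (3/2) / (6 * real n * Zc n T)"
    using nu_pos[OF assms(2), of T j] nu_pos[OF assms(2), of T k] Zc_pos[OF assms(2), of T] assms(2)
    by simp
  thus "0 < phat m n T i j k" "phat m n T i j k \<le> 1"
    using samp_p_ge[of n T j k i] assms(1) by (simp_all add: phat_def)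
qed

lemma phat_less_one_ge:
  assumes "phat m n T i j k < 1" "0 \<le> m"
  shows "m * (nu n T j * nu n T k) powr (3/2) / (6 * real n * Zc n T) \<le> phat m n T i j k"
proof -
  have "phat m n T i j k = m * samp_p n T i j k"
    using assms(1) by (simp add: phat_def min_def split: if_splits)
  thus ?thesis using mult_left_mono[OF samp_p_ge assms(2)] by simp
qed

lemma importance_weight_bounds:
  fixes a e w N Z m p :: real
  assumes N: "0 < N" and Nw: "1 \<le> N * w" and e: "0 \<le> e" and Z: "0 < Z" and m: "0 < m"
    and a: "\<bar>a\<bar> \<le> 4 * e * w / (N * sqrt N)"
    and p: "0 < p" "p \<le> 1" and p_ge: "p < 1 \<Longrightarrow> m * (w * sqrt w) / (6 * N * Z) \<le> p"
  shows "a\<^sup>2 * (1/p - 1) \<le> 96 * e\<^sup>2 * Z * sqrt w / (m * N\<^sup>2)"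
    and "p < 1 \<Longrightarrow> \<bar>a\<bar> / p \<le> 24 * e * Z / m"
proof -
  have "0 < N * w" using Nw by linarith
  hence w: "0 < w" using N by (simp add: zero_less_mult_iff)
  define r where "r = sqrt w"
  define s where "s = sqrt N"
  have rs: "0 < r" "0 < s" "w = r\<^sup>2" "N = s\<^sup>2" using w N by (simp_all add: r_def s_def)
  have "1 \<le> (r * s)\<^sup>2" using Nw rs by (simp add: power_mult_distrib mult.commute)
  hence rs_ge: "1 \<le> r * s" using power2_le_imp_le[of 1 "r * s"] rs by simp
  have inv_p: "1/p \<le> 6 * N * Z / (m * (w * sqrt w))" if "p < 1"
  proof -
    have "0 < m * (w * sqrt w) / (6 * N * Z)" using m w N Z by simp
    hence "1/p \<le> 1 / (m * (w * sqrt w) / (6 * N * Z))"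
      using p_ge[OF that] p(1) m w N Z by (intro divide_left_mono) auto
    thus ?thesis by simp
  qed
  have a_sq: "a\<^sup>2 \<le> (4 * e * w / (N * sqrt N))\<^sup>2"
    using a by (metis abs_ge_zero abs_le_square_iff abs_of_nonneg order_trans power2_abs)
  show "a\<^sup>2 * (1/p - 1) \<le> 96 * e\<^sup>2 * Z * sqrt w / (m * N\<^sup>2)"
  proof (cases "p < 1")
    case False thus ?thesis using p e Z m N w by simp
  next
    case True
    have "a\<^sup>2 * (1/p - 1) \<le> a\<^sup>2 * (1/p)" using p by (intro mult_left_mono) auto
    also have "\<dots> \<le> (4 * e * w / (N * sqrt N))\<^sup>2 * (6 * N * Z / (m * (w * sqrt w)))"
      using a_sq inv_p[OF True] p by (intro mult_mono) auto
    also have "\<dots> = 96 * e\<^sup>2 * Z * sqrt w / (m * N\<^sup>2)"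
      unfolding r_def[symmetric] s_def[symmetric] rs(3,4) using rs(1,2) Z m
      by (simp add: field_simps power2_eq_square)
    finally show ?thesis .
  qed
  show "\<bar>a\<bar> / p \<le> 24 * e * Z / m" if "p < 1"
  proof -
    have "\<bar>a\<bar> / p = \<bar>a\<bar> * (1/p)" by simp
    also have "\<dots> \<le> (4 * e * w / (N * sqrt N)) * (6 * N * Z / (m * (w * sqrt w)))"
      using a inv_p[OF that] p e w N by (intro mult_mono) auto
    also have "\<dots> = 24 * e * Z / m / (r * s)"
      unfolding r_def[symmetric] s_def[symmetric] rs(3,4) using rs(1,2) Z m
      by (simp add: field_simps power2_eq_square)
    also have "\<dots> \<le> 24 * e * Z / m" using rs_ge e Z m by (simp add: field_simps mult_le_cancel_left1)
    finally show ?thesis .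
  qed
qed

lemma reweighted_entry_bounds:
  fixes E T :: "nat \<Rightarrow> nat \<Rightarrow> nat \<Rightarrow> real" and U :: "nat \<Rightarrow> nat \<Rightarrow> real"
  assumes ijk: "i < n" "j < n" "k < n"
    and E_bound: "\<forall>i<n. \<forall>j<n. \<forall>k<n. \<bar>E i j k\<bar> \<le> frob3 n E / real n powr 1.5"
    and U_bound: "\<forall>j<n. \<bar>U j q\<bar> \<le> 2 * nu n T j" and m: "0 < m"
  shows "(E i j k * U j q * U k q)\<^sup>2 * (1 / phat m n T i j k - 1)
           \<le> 96 * (frob3 n E)\<^sup>2 * Zc n T * sqrt (nu n T j * nu n T k) / (m * (real n)\<^sup>2)"
    and "phat m n T i j k < 1 \<Longrightarrow>
           \<bar>E i j k * U j q * U k q\<bar> / phat m n T i j k \<le> 24 * frob3 n E * Zc n T / m"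
proof -
  have n: "0 < n" using ijk by simp
  have nu_j: "1 / sqrt n \<le> nu n T j" and nu_k: "1 / sqrt n \<le> nu n T k"
    by (rule nu_ge_inverse_sqrt)+
  have "1 / sqrt n * (1 / sqrt n) \<le> nu n T j * nu n T k"
    using nu_j nu_k nu_pos[OF n, of T j] by (intro mult_mono) auto
  hence Nw: "1 \<le> real n * (nu n T j * nu n T k)"
    using n by (simp add: field_simps)
  have "real n powr 1.5 = real n * sqrt n"
    using powr_three_halves[of "real n"] by simp
  hence "\<bar>E i j k\<bar> * \<bar>U j q\<bar> * \<bar>U k q\<bar> \<le> frob3 n E / (real n * sqrt n) * (2 * nu n T j) * (2 * nu n T k)"
    using E_bound U_bound ijk by (intro mult_mono) (auto simp: frob3_nonneg)
  hence a: "\<bar>E i j k * U j q * U k q\<bar> \<le> 4 * frob3 n E * (nu n T j * nu n T k) / (real n * sqrt n)"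
    by (simp add: abs_mult)
  have p_ge: "m * (nu n T j * nu n T k * sqrt (nu n T j * nu n T k)) / (6 * real n * Zc n T)
                \<le> phat m n T i j k" if "phat m n T i j k < 1"
    using phat_less_one_ge[OF that] m nu_pos[OF n] by (simp add: powr_three_halves less_imp_le)
  show "(E i j k * U j q * U k q)\<^sup>2 * (1 / phat m n T i j k - 1)
          \<le> 96 * (frob3 n E)\<^sup>2 * Zc n T * sqrt (nu n T j * nu n T k) / (m * (real n)\<^sup>2)"
   and "phat m n T i j k < 1 \<Longrightarrow>
          \<bar>E i j k * U j q * U k q\<bar> / phat m n T i j k \<le> 24 * frob3 n E * Zc n T / m"
    using importance_weight_bounds[OF _ Nw frob3_nonneg Zc_pos[OF n] m a
        phat_pos_le_one[OF m n] p_ge] n by simp_all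
qed

lemma slice_variance_le:
  fixes E T :: "nat \<Rightarrow> nat \<Rightarrow> nat \<Rightarrow> real" and U :: "nat \<Rightarrow> nat \<Rightarrow> real"
  assumes i: "i < n"
    and E_bound: "\<forall>i<n. \<forall>j<n. \<forall>k<n. \<bar>E i j k\<bar> \<le> frob3 n E / real n powr 1.5"
    and U_bound: "\<forall>j<n. \<bar>U j q\<bar> \<le> 2 * nu n T j" and m: "0 < m"
  shows "(\<Sum>j<n. \<Sum>k<n. (E i j k * U j q * U k q)\<^sup>2 * (1 / phat m n T i j k - 1))
           \<le> 192 * (frob3 n E)\<^sup>2 * Zc n T / (m * sqrt n)"
proof -
  define K where "K = 96 * (frob3 n E)\<^sup>2 * Zc n T / (m * (real n)\<^sup>2)"
  have K: "0 \<le> K" using m Zc_pos[of n T] i by (simp add: K_def)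
  have entry: "(E i j k * U j q * U k q)\<^sup>2 * (1 / phat m n T i j k - 1) \<le> K * sqrt (nu n T j * nu n T k)"
    if "j < n" "k < n" for j k
    using reweighted_entry_bounds(1)[where E = E and U = U and T = T, OF i that E_bound U_bound m] by (simp add: K_def mult.assoc)
  have "(\<Sum>j<n. \<Sum>k<n. (E i j k * U j q * U k q)\<^sup>2 * (1 / phat m n T i j k - 1))
      \<le> (\<Sum>j<n. \<Sum>k<n. K * sqrt (nu n T j * nu n T k))"
    using entry by (intro sum_mono) simp
  also have "\<dots> \<le> (\<Sum>j<n. \<Sum>k<n. K * ((nu n T j + nu n T k) / 2))"
    using K nu_pos[of n T] i
    by (intro sum_mono mult_left_mono arith_geo_mean_sqrt) (auto intro: less_imp_le)
  also have "\<dots> = K * real n * (\<Sum>j<n. nu n T j)"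
    by (simp add: sum.distrib sum_divide_distrib[symmetric] sum_distrib_left[symmetric] field_simps)
  also have "\<dots> \<le> K * real n * (2 * sqrt n)"
    using K sum_nu_le[of n T] by (intro mult_left_mono) auto
  also have "\<dots> = 192 * (frob3 n E)\<^sup>2 * Zc n T / (m * sqrt n)"
  proof -
    have "real n = (sqrt n)\<^sup>2" by simp
    thus ?thesis using i m unfolding K_def by (simp add: field_simps power2_eq_square)
  qed
  finally show ?thesis .
qed

lemma sum_slab_eq: "(\<Sum>x\<in>{i} \<times> {..<n} \<times> {..<n}. h x) = (\<Sum>j<n. \<Sum>k<n. h (i, j, k))"
proof -
  have "{i} \<times> {..<n} \<times> {..<n} = Pair i ` ({..<n} \<times> {..<n})" by auto
  hence "(\<Sum>x\<in>{i} \<times> {..<n} \<times> {..<n}. h x) = (\<Sum>y\<in>{..<n} \<times> {..<n}. h (i, y))"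
    by (simp add: sum.reindex inj_on_def)
  thus ?thesis by (simp add: sum.cartesian_product)
qed

lemma coordinate_tail_le:
  fixes E T :: "nat \<Rightarrow> nat \<Rightarrow> nat \<Rightarrow> real" and U :: "nat \<Rightarrow> nat \<Rightarrow> real"
  assumes i: "i < n"
    and E_bound: "\<forall>i<n. \<forall>j<n. \<forall>k<n. \<bar>E i j k\<bar> \<le> frob3 n E / real n powr 1.5"
    and U_bound: "\<forall>j<n. \<bar>U j q\<bar> \<le> 2 * nu n T j"
    and \<epsilon>: "0 < \<epsilon>" "\<epsilon> \<le> 1" and m: "0 < m" and e: "0 < frob3 n E"
  shows "measure_pmf.prob (delta_dist m n T)
           {\<delta>. \<epsilon> * frob3 n E / sqrt n \<le> \<bar>\<Sum>j<n. \<Sum>k<n.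
                 (of_bool (\<delta> (i, j, k)) * Wt m n T i j k - 1) * E i j k * U j q * U k q\<bar>}
         \<le> 2 * exp (- (\<epsilon>\<^sup>2 * m / (768 * Zc n T * sqrt n)))"
proof -
  define ph where "ph x = (case x of (i, j, k) \<Rightarrow> phat m n T i j k)" for x
  define a where "a x = (case x of (i, j, k) \<Rightarrow> E i j k * U j q * U k q)" for x
  define V where "V = 192 * (frob3 n E)\<^sup>2 * Zc n T / (m * sqrt n)"
  \<comment> \<open>l = t / (2 V) minimises the Chernoff exponent l^2 V - l t at t = \<epsilon> ||E||_F / sqrt n\<close>
  define l where "l = \<epsilon> * m / (384 * frob3 n E * Zc n T)"
  have n: "0 < n" using i by simp
  have Z: "0 < Zc n T" using Zc_pos[OF n] .
  have l: "0 < l" using \<epsilon> m e Z by (simp add: l_def)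
  have dist: "delta_dist m n T = Pi_pmf ({..<n} \<times> {..<n} \<times> {..<n}) False (\<lambda>x. bernoulli_pmf (ph x))"
    by (simp add: delta_dist_def ph_def case_prod_unfold)
  have small: "l * \<bar>a x\<bar> / ph x \<le> 1" if x: "x \<in> {i} \<times> {..<n} \<times> {..<n}" and x_small: "ph x < 1" for x
  proof -
    obtain j k where jk: "x = (i, j, k)" "j < n" "k < n" using x by (cases x rule: prod_cases3) auto
    have "\<bar>a x\<bar> / ph x \<le> 24 * frob3 n E * Zc n T / m"
      using reweighted_entry_bounds(2)[where E = E and U = U and T = T, OF i jk(2,3) E_bound U_bound m]
        x_small by (simp add: jk(1) a_def ph_def)
    hence "l * (\<bar>a x\<bar> / ph x) \<le> l * (24 * frob3 n E * Zc n T / m)"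
      using l by (intro mult_left_mono) auto
    also have "\<dots> = \<epsilon> / 16" using m e Z by (simp add: l_def field_simps)
    finally have "l * (\<bar>a x\<bar> / ph x) \<le> \<epsilon> / 16" .
    thus ?thesis using \<epsilon> by (simp only: times_divide_eq_right)
  qed
  have variance: "(\<Sum>x\<in>{i} \<times> {..<n} \<times> {..<n}. (a x)\<^sup>2 * (1 / ph x - 1)) \<le> V"
    using slice_variance_le[where E = E and U = U and T = T, OF i E_bound U_bound m]
    by (simp add: sum_slab_eq a_def ph_def V_def)
  have "measure_pmf.prob (delta_dist m n T)
          {\<delta>. \<epsilon> * frob3 n E / sqrt n \<le> \<bar>\<Sum>j<n. \<Sum>k<n.
                 (of_bool (\<delta> (i, j, k)) * Wt m n T i j k - 1) * E i j k * U j q * U k q\<bar>}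
      = measure_pmf.prob (Pi_pmf ({..<n} \<times> {..<n} \<times> {..<n}) False (\<lambda>x. bernoulli_pmf (ph x)))
          {\<delta>. \<epsilon> * frob3 n E / sqrt n \<le>
                \<bar>\<Sum>x\<in>{i} \<times> {..<n} \<times> {..<n}. (of_bool (\<delta> x) * (1 / ph x) - 1) * a x\<bar>}"
    by (simp add: dist sum_slab_eq a_def ph_def Wt_def mult.assoc)
  also have "\<dots> \<le> 2 * exp (l\<^sup>2 * V - l * (\<epsilon> * frob3 n E / sqrt n))"
    using i phat_pos_le_one[OF m n] small variance l
    by (intro Pi_pmf_bernoulli_abs_tail_le) (auto simp: ph_def)
  also have "l\<^sup>2 * V - l * (\<epsilon> * frob3 n E / sqrt n) = - (\<epsilon>\<^sup>2 * m / (768 * Zc n T * sqrt n))"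
    using n m e Z by (simp add: l_def V_def field_simps power2_eq_square)
  finally show ?thesis .
qed

lemma two_exp_neg_le_powr:
  fixes N x :: real
  assumes N: "2 \<le> N" and x: "24 * (ln N)\<^sup>2 \<le> x"
  shows "2 * exp (- x) \<le> N powr (-11)"
proof -
  have ln_N: "ln 2 \<le> ln N" using N by simp
  hence "1/2 \<le> ln N" using ln2_ge_two_thirds by linarith
  hence "12 * ln N \<le> 24 * (ln N)\<^sup>2" by (simp add: power2_eq_square)
  hence "- x \<le> - ln 2 - 11 * ln N" using ln_N x by linarith
  hence "exp (- x) \<le> exp (- ln 2 - 11 * ln N)" by simp
  thus ?thesis using N by (simp add: exp_diff exp_minus powr_def field_simps)
qed

lemma sampled_error_norm_bound:
  fixes n q :: nat and E T :: "nat \<Rightarrow> nat \<Rightarrow> nat \<Rightarrow> real" and U :: "nat \<Rightarrow> nat \<Rightarrow> real"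
    and \<epsilon> m :: real
  assumes E_bound: "\<forall>i<n. \<forall>j<n. \<forall>k<n. \<bar>E i j k\<bar> \<le> frob3 n E / real n powr 1.5"
    and U_bound: "\<forall>j<n. \<bar>U j q\<bar> \<le> 2 * nu n T j"
    and \<epsilon>: "0 < \<epsilon>" "\<epsilon> \<le> 1"
    and m_ge: "18432 / \<epsilon>\<^sup>2 * real n * Zc n T * (ln (real n))\<^sup>2 \<le> m"
  shows "1 - real n powr (-10) \<le> measure_pmf.prob (delta_dist m n T)
           {\<delta>. sqrt (\<Sum>i<n. (\<Sum>j<n. \<Sum>k<n.
                  (of_bool (\<delta> (i, j, k)) * Wt m n T i j k - 1) * E i j k * U j q * U k q)\<^sup>2)
                \<le> \<epsilon> * frob3 n E}"
proof -
  define X where "X i \<delta> = (\<Sum>j<n. \<Sum>k<n.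
    (of_bool (\<delta> (i, j, k)) * Wt m n T i j k - 1) * E i j k * U j q * U k q)" for i \<delta>
  consider (small_n) "n \<le> 1" | (zero_noise) "frob3 n E = 0" | (generic) "2 \<le> n" "0 < frob3 n E"
    using frob3_nonneg[of n E] by linarith
  thus ?thesis
  proof cases
    case small_n
    thus ?thesis using \<epsilon> frob3_nonneg[of n E] by (cases n) simp_all
  next
    case zero_noise
    hence "X i \<delta> = 0" if "i < n" for i \<delta>
      using E_bound that by (auto simp: X_def intro!: sum.neutral)
    thus ?thesis using zero_noise by (simp add: X_def [symmetric])
  next
    case generic
    have Z: "0 < Zc n T" using Zc_pos generic by simp
    have ln_n: "0 < ln (real n)" using generic by simp
    have "0 < 18432 / \<epsilon>\<^sup>2 * real n * Zc n T * (ln n)\<^sup>2" using generic \<epsilon> Z ln_n by simp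
    hence m: "0 < m" using m_ge by linarith
    have "24 * (ln n)\<^sup>2 \<le> 24 * (ln n)\<^sup>2 * sqrt n" using generic by simp
    also have "\<dots> = 18432 * real n * Zc n T * (ln n)\<^sup>2 / (768 * Zc n T * sqrt n)"
      using Z generic real_sqrt_pow2[of n] by (simp add: field_simps power2_eq_square)
    also have "\<dots> \<le> \<epsilon>\<^sup>2 * m / (768 * Zc n T * sqrt n)"
      using m_ge \<epsilon> Z by (intro divide_right_mono) (simp_all add: field_simps)
    finally have "2 * exp (- (\<epsilon>\<^sup>2 * m / (768 * Zc n T * sqrt n))) \<le> real n powr (-11)"
      using generic by (intro two_exp_neg_le_powr) simp_all
    hence "measure_pmf.prob (delta_dist m n T) {\<delta>. \<epsilon> * frob3 n E / sqrt n \<le> \<bar>X i \<delta>\<bar>}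
             \<le> real n powr (-11)" if "i < n" for i
      using coordinate_tail_le[where E = E and U = U and T = T, OF that E_bound U_bound \<epsilon> m generic(2)]
      unfolding X_def by simp
    hence "1 - real n * real n powr (-11) \<le> measure_pmf.prob (delta_dist m n T)
             {\<delta>. sqrt (\<Sum>i<n. (X i \<delta>)\<^sup>2) \<le> sqrt n * (\<epsilon> * frob3 n E / sqrt n)}"
      using \<epsilon> generic by (intro prob_root_sum_squares_le) auto
    moreover have "real n * real n powr (-11) = real n powr (-10)"
      using generic powr_add[of "real n" 1 "-11"] by simp
    ultimately show ?thesis using generic by (simp add: X_def)
  qed
qed

\<comment> \<open>Only the incoherence of E and of the chosen column of U enter the proof.\<close>
theorem mainTheorem10:
  shows "\<exists>C::real. C > 0 \<and>
    (\<forall>(n::nat) (r::nat) (\<sigma>::nat \<Rightarrow> real) (Us::nat \<Rightarrow> nat \<Rightarrow> real)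
       (E::nat \<Rightarrow> nat \<Rightarrow> nat \<Rightarrow> real) (U::nat \<Rightarrow> nat \<Rightarrow> real) (q::nat) (\<epsilon>::real) (m::real).
      let T = (\<lambda>i j k. signal3 r \<sigma> Us i j k + E i j k) in
      (\<forall>l<r. \<forall>l'<r. (\<Sum>i<n. Us i l * Us i l') = (if l = l' then 1 else 0)) \<longrightarrow>
      (\<forall>l<r. \<sigma> l > 0) \<longrightarrow>
      (\<forall>i<n. \<forall>j<n. \<forall>k<n. \<bar>E i j k\<bar> \<le> frob3 n E / real n powr 1.5) \<longrightarrow>
      frob3 n T > 0 \<longrightarrow>
      (\<forall>l<r. (\<Sum>i<n. (U i l)\<^sup>2) = 1) \<longrightarrow>
      (\<forall>i<n. \<forall>l<r. \<bar>U i l\<bar> \<le> 2 * nu n T i) \<longrightarrow>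
      q < r \<longrightarrow> 0 < \<epsilon> \<longrightarrow> \<epsilon> \<le> 1 \<longrightarrow>
      m \<ge> C / \<epsilon>\<^sup>2 * real n * Zc n T * (ln (real n))\<^sup>2 \<longrightarrow>
      measure_pmf.prob (delta_dist m n T)
        {\<delta>. sqrt (\<Sum>i<n. (\<Sum>j<n. \<Sum>k<n.
                 (of_bool (\<delta> (i, j, k)) * Wt m n T i j k - 1) * E i j k * U j q * U k q)\<^sup>2)
              \<le> \<epsilon> * frob3 n E}
      \<ge> 1 - real n powr (-10))"
  unfolding Let_def
  by (intro exI[of _ 18432] conjI allI impI) (auto intro!: sampled_error_norm_bound)

end
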